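(* Let $q$ be a prime power and $n\ge 3$. Let $\mathcal{L}$ be a set of lines of $\mathrm{AG}(n,q)$ such that for some $x$, every line spread $\mathcal{S}$ of $\mathrm{AG}(n,q)$ satisfies $|\mathcal{L}\cap\mathcal{S}|=x$. Then $\mathcal{L}$ is a Cameron-Liebler line class of $\mathrm{AG}(n,q)$ with parameter $x$.
   Context: $\mathrm{AG}(n,q)$ is $\mathrm{PG}(n,q)$ with a hyperplane $\pi_\infty$ removed; affine points are points outside $\pi_\infty$, (affine) lines are projective lines not contained in $\pi_\infty$. A line spread of $\mathrm{AG}(n,q)$ is a set of affine lines pairwise sharing no affine point and covering all affine points. With $A_n$ the incidence matrix of affine points versus affine lines, a set $\mathcal{L}$ of affine lines is a Cameron-Liebler line class of $\mathrm{AG}(n,q)$ if its characteristic vector lies in the real row space $\mathrm{Im}(A_n^T)$; its parameter is $|\mathcal{L}|(q-1)/(q^n-1)$. *)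

theory Defs
  imports "HOL-Analysis.Finite_Cartesian_Product"
begin

text \<open>AG(n,q) in coordinates: affine points are the vectors of GF(q)^n (here 'a ^ 'n for a
finite field 'a with q = CARD('a), and n = CARD('n)); affine lines are the sets p + <v>, v nonzero.\<close>

definition aff_lines :: "(('a::{finite,field}) ^ ('n::finite)) set set" where
  "aff_lines = {{p + t *s v | t. True} | p v. v \<noteq> 0}"

definition is_line_spread :: "(('a::{finite,field}) ^ ('n::finite)) set set \<Rightarrow> bool" where
  "is_line_spread S \<longleftrightarrow> S \<subseteq> aff_lines
     \<and> (\<forall>l\<in>S. \<forall>m\<in>S. l \<noteq> m \<longrightarrow> l \<inter> m = {})
     \<and> \<Union>S = UNIV"

text \<open>Incidence matrix A_n: rows = affine points, columns = affine lines.
The characteristic vector of L lies in Im(A_n^T) iff it equals A_n^T c for some real vector c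
indexed by points, i.e. chi_L(l) = sum_P A(P,l) c(P) for every affine line l.\<close>

definition incid :: "('a::{finite,field}) ^ ('n::finite) \<Rightarrow> ('a ^ 'n) set \<Rightarrow> real" where
  "incid P l = (if P \<in> l then 1 else 0)"

definition CL_line_class :: "(('a::{finite,field}) ^ ('n::finite)) set set \<Rightarrow> bool" where
  "CL_line_class L \<longleftrightarrow> L \<subseteq> aff_lines \<and>
     (\<exists>c :: 'a ^ 'n \<Rightarrow> real. \<forall>l\<in>aff_lines.
        (if l \<in> L then 1 else 0) = (\<Sum>P\<in>UNIV. incid P l * c P))"

definition CL_parameter :: "(('a::{finite,field}) ^ ('n::finite)) set set \<Rightarrow> real" where
  "CL_parameter L = real (card L) * (real CARD('a) - 1) / (real CARD('a) ^ CARD('n) - 1)"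

end

theory Submission
  imports Defs "HOL-Analysis.Cartesian_Space"
begin

(*
  Write q = CARD('a), chi for the indicator of L, and deg z for the number of lines of L
  through the point z. Fix an affine line l = p + <v> and count the pairs (w, m) of a nonzero
  direction w and a line m of L in the parallel class of w, weighted by |m Int l|: every line
  has q - 1 directions, so the total is (q - 1) * sum_{z in l} deg z. A direction parallel to v
  contributes q * chi(l). For w not parallel to v, the lines of class w meeting l are those
  inside the plane p + <v, w>; replacing them by the lines of class v inside that plane gives
  another spread, so L contains equally many of either kind. Counting the planes through a
  line of class v then yields
    (q - 1) * sum_{z in l} deg z = (q^n - q) * chi(l) + q (q - 1) x,
  so the point weights (q - 1) (deg z - x) / (q^n - q) sum to chi(l) along every line l.
  The parameter follows by summing |L Int class(w)| = x over the q^n - 1 nonzero directions.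
*)

definition line :: "'a::field ^ 'n::finite \<Rightarrow> 'a ^ 'n \<Rightarrow> ('a ^ 'n) set" where
  "line p v = {p + t *s v | t. True}"

definition parallel_class :: "'a::field ^ 'n::finite \<Rightarrow> ('a ^ 'n) set set" where
  "parallel_class v = range (\<lambda>p. line p v)"

definition plane :: "'a::field ^ 'n::finite \<Rightarrow> 'a ^ 'n \<Rightarrow> 'a ^ 'n \<Rightarrow> ('a ^ 'n) set" where
  "plane p v w = {p + a *s v + b *s w | a b. True}"

lemma aff_lines_eq: "aff_lines = {line p v | p v. v \<noteq> 0}"
  unfolding aff_lines_def line_def ..

lemma mem_line_iff: "y \<in> line p v \<longleftrightarrow> (\<exists>t. y = p + t *s v)"
  by (auto simp: line_def)

lemma mem_plane_iff: "z \<in> plane p v w \<longleftrightarrow> (\<exists>a b. z = p + a *s v + b *s w)"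
  by (auto simp: plane_def)

lemma base_point_in_line: "p \<in> line p v"
  unfolding mem_line_iff by (metis add.right_neutral vector_smult_lzero)

lemma base_point_in_plane: "p \<in> plane p v w"
  unfolding mem_plane_iff by (metis add.right_neutral vector_smult_lzero)

lemma line_shift: "line (p + a *s v) v = line p v"
proof (rule set_eqI)
  fix z
  have "z = p + a *s v + t *s v \<longleftrightarrow> z = p + (a + t) *s v" for t
    by (simp add: vector_sadd_rdistrib add.assoc)
  then show "z \<in> line (p + a *s v) v \<longleftrightarrow> z \<in> line p v"
    unfolding mem_line_iff by (metis add.commute diff_add_cancel)
qed

lemma line_eq_of_mem: "y \<in> line p v \<Longrightarrow> line y v = line p v"
  unfolding mem_line_iff using line_shift by blast

lemma line_smult:
  assumes "t \<noteq> 0"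
  shows "line p (t *s v) = line p v"
proof (rule set_eqI)
  fix z
  have "z = p + s *s (t *s v) \<longleftrightarrow> z = p + (s * t) *s v" for s
    by (simp add: vector_smult_assoc)
  then show "z \<in> line p (t *s v) \<longleftrightarrow> z \<in> line p v"
    unfolding mem_line_iff using assms by (metis nonzero_eq_divide_eq)
qed

lemma direction_in_span_of_line_eq:
  assumes "line r w = line p u"
  shows "w \<in> vec.span {u}"
proof -
  have "r \<in> line p u" using assms base_point_in_line by metis
  moreover have "r + w \<in> line p u"
    using assms mem_line_iff[of "r + w" r w] by (metis vector_smult_lid)
  ultimately obtain a b where "r = p + a *s u" "r + w = p + b *s u"
    unfolding mem_line_iff by blast
  then have "w = (b - a) *s u" by (simp add: vector_sub_rdistrib algebra_simps)
  then show ?thesis unfolding vec.span_singleton by blast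
qed

lemma line_of_parallel_class_through:
  assumes "m \<in> parallel_class v" "z \<in> m"
  shows "m = line z v"
proof -
  obtain r where "m = line r v" using assms(1) unfolding parallel_class_def by blast
  then show ?thesis using assms(2) line_eq_of_mem by metis
qed

lemma parallel_class_smult:
  assumes "t \<noteq> 0"
  shows "parallel_class (t *s v) = parallel_class v"
  unfolding parallel_class_def line_smult[OF assms] ..

lemma parallel_classes_disjoint:
  assumes "w \<notin> vec.span {v}"
  shows "parallel_class v \<inter> parallel_class w = {}"
proof (rule ccontr)
  assume "parallel_class v \<inter> parallel_class w \<noteq> {}"
  then obtain a b where "line b w = line a v" unfolding parallel_class_def by auto
  then show False using assms direction_in_span_of_line_eq by metis
qed

lemma plane_commute: "plane p v w = plane p w v"
proof -
  have "p + a *s v + b *s w = p + b *s w + a *s v" for a b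
    by (simp add: algebra_simps)
  then show ?thesis unfolding set_eq_iff mem_plane_iff by metis
qed

lemma line_subset_plane_iff: "line r v \<subseteq> plane p v w \<longleftrightarrow> r \<in> plane p v w"
proof
  assume "r \<in> plane p v w"
  then obtain a b where r: "r = p + a *s v + b *s w" unfolding mem_plane_iff by blast
  have "r + t *s v = p + (a + t) *s v + b *s w" for t
    by (simp add: r vector_sadd_rdistrib algebra_simps)
  then show "line r v \<subseteq> plane p v w" unfolding subset_iff mem_line_iff mem_plane_iff by blast
qed (use base_point_in_line in blast)

lemma line_subset_plane_iff': "line r w \<subseteq> plane p v w \<longleftrightarrow> r \<in> plane p v w"
  using line_subset_plane_iff plane_commute by metis

lemma coeff_eq_of_not_in_span:
  assumes "w \<notin> vec.span {v}" and "a *s v + b *s w = a' *s v + b' *s w"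
  shows "b = b'"
proof (rule ccontr)
  assume "b \<noteq> b'"
  have "(b - b') *s w = (a' - a) *s v"
    using assms(2) by (simp add: vector_sub_rdistrib algebra_simps)
  then have "w = ((a' - a) / (b - b')) *s v"
    using \<open>b \<noteq> b'\<close> by (metis diff_left_imp_eq diff_self nonzero_mult_div_cancel_left
      times_divide_eq_right vec.scale_cancel_left vec.scale_scale)
  then show False using assms(1) unfolding vec.span_singleton by blast
qed

lemma card_Int_line_of_transversal:
  assumes "w \<notin> vec.span {v}" and "m \<in> parallel_class w"
  shows "card (m \<inter> line p v) = of_bool (m \<subseteq> plane p v w)"
proof (cases "m \<subseteq> plane p v w")
  case True
  obtain r where m: "m = line r w" using assms(2) unfolding parallel_class_def by blast
  then have "r \<in> plane p v w" using True base_point_in_line by blast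
  then obtain a b where r: "r = p + a *s v + b *s w" unfolding mem_plane_iff by blast
  have "m \<inter> line p v = {p + a *s v}"
  proof (intro equalityI subsetI)
    fix z assume "z \<in> m \<inter> line p v"
    then obtain a' b' where z: "z = p + a' *s v" "z = r + b' *s w"
      unfolding m Int_iff mem_line_iff by blast
    then have "a' *s v + 0 *s w = a *s v + (b + b') *s w"
      by (simp add: r vector_sadd_rdistrib algebra_simps)
    then have "b + b' = 0" using coeff_eq_of_not_in_span[OF assms(1)] by metis
    have "z = p + a *s v + (b + b') *s w" by (simp add: z(2) r vector_sadd_rdistrib add.assoc)
    then show "z \<in> {p + a *s v}" using \<open>b + b' = 0\<close> by simp
  next
    fix z assume "z \<in> {p + a *s v}"
    then have "z = r + (- b) *s w" "z = p + a *s v" by (simp_all add: r vector_smult_lneg)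
    then show "z \<in> m \<inter> line p v" unfolding m Int_iff mem_line_iff by blast
  qed
  then show ?thesis using True by simp
next
  case False
  have "z \<notin> m" if "z \<in> line p v" for z
  proof
    assume "z \<in> m"
    have "z \<in> plane p v w"
      using that base_point_in_plane line_subset_plane_iff by blast
    then have "line z w \<subseteq> plane p v w" by (simp add: line_subset_plane_iff')
    then show False
      using False line_of_parallel_class_through[OF assms(2) \<open>z \<in> m\<close>] by simp
  qed
  then have "m \<inter> line p v = {}" by blast
  then show ?thesis using False by simp
qed

lemma card_line:
  fixes v :: "'a::{finite,field} ^ 'n::finite"
  assumes "v \<noteq> 0"
  shows "card (line p v) = CARD('a)"
proof -
  have "line p v = range (\<lambda>t. p + t *s v)" by (auto simp: line_def)
  moreover have "inj (\<lambda>t. p + t *s v)" using assms by (auto intro: injI)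
  ultimately show ?thesis by (simp add: card_image)
qed

lemma card_span_singleton:
  fixes v :: "'a::{finite,field} ^ 'n::finite"
  assumes "v \<noteq> 0"
  shows "card (vec.span {v}) = CARD('a)"
proof -
  have "inj (\<lambda>t. t *s v)" using assms by (auto intro: injI)
  then show ?thesis unfolding vec.span_singleton by (simp add: card_image)
qed

lemma directions_of_line:
  assumes "u \<noteq> 0"
  shows "{w. w \<noteq> 0 \<and> line p u \<in> parallel_class w} = vec.span {u} - {0}"
proof (intro equalityI subsetI)
  fix w assume "w \<in> {w. w \<noteq> 0 \<and> line p u \<in> parallel_class w}"
  then obtain r where "w \<noteq> 0" "line r w = line p u" unfolding parallel_class_def by auto
  then show "w \<in> vec.span {u} - {0}" using direction_in_span_of_line_eq by blast
next
  fix w assume "w \<in> vec.span {u} - {0}"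
  then obtain t where "w = t *s u" "t \<noteq> 0" unfolding vec.span_singleton by auto
  then have "parallel_class w = parallel_class u" by (simp add: parallel_class_smult)
  then show "w \<in> {w. w \<noteq> 0 \<and> line p u \<in> parallel_class w}"
    using \<open>w \<in> vec.span {u} - {0}\<close> by (simp add: parallel_class_def)
qed

lemma card_directions_of_line:
  fixes m :: "('a::{finite,field} ^ 'n::finite) set"
  assumes "m \<in> aff_lines"
  shows "card {w. w \<noteq> 0 \<and> m \<in> parallel_class w} = CARD('a) - 1"
proof -
  obtain p u where m: "m = line p u" and "u \<noteq> 0" using assms unfolding aff_lines_eq by blast
  have "card (vec.span {u}) = CARD('a)" using \<open>u \<noteq> 0\<close> by (rule card_span_singleton)
  then show ?thesis
    unfolding m directions_of_line[OF \<open>u \<noteq> 0\<close>] by (simp add: card_Diff_singleton vec.span_zero)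
qed

lemma parallel_class_subset_aff_lines: "v \<noteq> 0 \<Longrightarrow> parallel_class v \<subseteq> aff_lines"
  unfolding aff_lines_eq parallel_class_def by blast

lemma is_line_spreadI:
  assumes "S \<subseteq> aff_lines"
    and "\<And>z. line_through z \<in> S" and "\<And>z. z \<in> line_through z"
    and "\<And>m z. m \<in> S \<Longrightarrow> z \<in> m \<Longrightarrow> m = line_through z"
  shows "is_line_spread S"
  unfolding is_line_spread_def using assms by blast

lemma is_line_spread_parallel_class:
  assumes "v \<noteq> 0"
  shows "is_line_spread (parallel_class v)"
proof (rule is_line_spreadI[where line_through = "\<lambda>z. line z v"])
  show "parallel_class v \<subseteq> aff_lines" using assms by (rule parallel_class_subset_aff_lines)
qed (auto simp: parallel_class_def base_point_in_line line_of_parallel_class_through)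

definition switched_class :: "'a::field ^ 'n::finite \<Rightarrow> 'a ^ 'n \<Rightarrow> 'a ^ 'n \<Rightarrow> ('a ^ 'n) set set" where
  "switched_class p v w =
     {m \<in> parallel_class w. \<not> m \<subseteq> plane p v w} \<union> {m \<in> parallel_class v. m \<subseteq> plane p v w}"

lemma is_line_spread_switched_class:
  assumes "v \<noteq> 0" and "w \<noteq> 0"
  shows "is_line_spread (switched_class p v w)"
proof (rule is_line_spreadI)
  let ?through = "\<lambda>z. if z \<in> plane p v w then line z v else line z w"
  show "switched_class p v w \<subseteq> aff_lines"
    unfolding switched_class_def using assms parallel_class_subset_aff_lines by blast
  show "?through z \<in> switched_class p v w" for z
  proof (cases "z \<in> plane p v w")
    case True
    then have "line z v \<subseteq> plane p v w" using line_subset_plane_iff by blast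
    then show ?thesis using True unfolding switched_class_def parallel_class_def by auto
  next
    case False
    then have "\<not> line z w \<subseteq> plane p v w" using base_point_in_line by blast
    then show ?thesis using False unfolding switched_class_def parallel_class_def by auto
  qed
  show "z \<in> ?through z" for z
    by (simp add: base_point_in_line)
  show "m = ?through z" if m: "m \<in> switched_class p v w" and "z \<in> m" for m z
  proof (cases "m \<in> parallel_class w \<and> \<not> m \<subseteq> plane p v w")
    case True
    then have "m = line z w" using line_of_parallel_class_through \<open>z \<in> m\<close> by blast
    moreover have "z \<notin> plane p v w" using True calculation line_subset_plane_iff' by blast
    ultimately show ?thesis by simp
  next
    case False
    then have "m \<in> parallel_class v" "m \<subseteq> plane p v w"
      using m unfolding switched_class_def by auto
    then show ?thesis using \<open>z \<in> m\<close> line_of_parallel_class_through by auto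
  qed
qed

lemma card_Int_switched_lines:
  fixes L :: "('a::{finite,field} ^ 'n::finite) set set"
  assumes spreads: "\<forall>S. is_line_spread S \<longrightarrow> card (L \<inter> S) = x"
    and "v \<noteq> 0" and w: "w \<notin> vec.span {v}"
  shows "card (L \<inter> {m \<in> parallel_class w. m \<subseteq> plane p v w})
       = card (L \<inter> {m \<in> parallel_class v. m \<subseteq> plane p v w})"
proof -
  let ?K = "L \<inter> {m \<in> parallel_class w. \<not> m \<subseteq> plane p v w}"
  have "w \<noteq> 0" using w vec.span_zero by metis
  have "L \<inter> parallel_class w = ?K \<union> (L \<inter> {m \<in> parallel_class w. m \<subseteq> plane p v w})"
    by blast
  moreover have "L \<inter> switched_class p v w = ?K \<union> (L \<inter> {m \<in> parallel_class v. m \<subseteq> plane p v w})"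
    unfolding switched_class_def by blast
  moreover have "?K \<inter> {m \<in> parallel_class v. m \<subseteq> plane p v w} = {}"
    using parallel_classes_disjoint[OF w] by blast
  moreover have "card (L \<inter> parallel_class w) = card (L \<inter> switched_class p v w)"
    using spreads is_line_spread_parallel_class is_line_spread_switched_class assms \<open>w \<noteq> 0\<close>
    by metis
  ultimately show ?thesis by (simp add: card_Un_disjoint disjoint_iff)
qed

lemma directions_of_planes_through:
  assumes "r - p \<notin> vec.span {v}"
  shows "{w. w \<notin> vec.span {v} \<and> r \<in> plane p v w}
       = (\<lambda>(a, b). a *s v + b *s (r - p)) ` (UNIV \<times> - {0})"
proof (intro equalityI subsetI)
  fix w assume "w \<in> {w. w \<notin> vec.span {v} \<and> r \<in> plane p v w}"
  then obtain a b where "r = p + a *s v + b *s w" unfolding mem_plane_iff by blast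
  then have u: "r - p = a *s v + b *s w" by (simp add: algebra_simps)
  have "b \<noteq> 0"
  proof
    assume "b = 0"
    then have "r - p = a *s v" using u by simp
    then show False using assms unfolding vec.span_singleton by blast
  qed
  then have "w = (- a / b) *s v + (1 / b) *s (r - p)"
    unfolding u
    by (simp add: vector_add_ldistrib vector_smult_assoc vector_sadd_rdistrib[symmetric])
  then show "w \<in> (\<lambda>(a, b). a *s v + b *s (r - p)) ` (UNIV \<times> - {0})"
    using \<open>b \<noteq> 0\<close> by (auto intro!: image_eqI[where x = "(- a / b, 1 / b)"])
next
  fix w assume "w \<in> (\<lambda>(a, b). a *s v + b *s (r - p)) ` (UNIV \<times> - {0})"
  then obtain a b where "b \<noteq> 0" and w: "w = a *s v + b *s (r - p)" by auto
  have "w \<notin> vec.span {v}"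
  proof
    assume "w \<in> vec.span {v}"
    then obtain t where "a *s v + b *s (r - p) = t *s v + 0 *s (r - p)"
      unfolding w vec.span_singleton by auto
    then show False using coeff_eq_of_not_in_span[OF assms] \<open>b \<noteq> 0\<close> by blast
  qed
  moreover have "r = p + (- a / b) *s v + (1 / b) *s w"
    unfolding w using \<open>b \<noteq> 0\<close>
    by (simp add: vector_add_ldistrib vector_smult_assoc vector_sadd_rdistrib[symmetric])
  ultimately show "w \<in> {w. w \<notin> vec.span {v} \<and> r \<in> plane p v w}"
    unfolding mem_plane_iff by blast
qed

lemma card_directions_of_planes_through:
  fixes v :: "'a::{finite,field} ^ 'n::finite"
  assumes "v \<noteq> 0" and "r - p \<notin> vec.span {v}"
  shows "card {w. w \<notin> vec.span {v} \<and> r \<in> plane p v w} = CARD('a) * (CARD('a) - 1)"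
proof -
  have "a = a' \<and> b = b'" if eq: "a *s v + b *s (r - p) = a' *s v + b' *s (r - p)" for a b a' b'
  proof -
    have "b = b'" using eq by (rule coeff_eq_of_not_in_span[OF assms(2)])
    then show ?thesis using eq assms(1) by simp
  qed
  then have "inj_on (\<lambda>(a, b). a *s v + b *s (r - p)) (UNIV \<times> - {0})"
    by (auto simp: inj_on_def)
  then show ?thesis
    unfolding directions_of_planes_through[OF assms(2)]
    by (simp add: card_image card_cartesian_product Compl_eq_Diff_UNIV card_Diff_singleton)
qed

lemma card_directions_of_planes_containing:
  fixes v :: "'a::{finite,field} ^ 'n::finite"
  assumes "v \<noteq> 0" and "m \<in> parallel_class v"
  shows "card {w. w \<notin> vec.span {v} \<and> m \<subseteq> plane p v w}
       = (if m = line p v then CARD('a) ^ CARD('n) - CARD('a) else CARD('a) * (CARD('a) - 1))"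
proof -
  obtain r where m: "m = line r v" using assms(2) unfolding parallel_class_def by blast
  show ?thesis
  proof (cases "m = line p v")
    case True
    then have "{w. w \<notin> vec.span {v} \<and> m \<subseteq> plane p v w} = UNIV - vec.span {v}"
      unfolding True line_subset_plane_iff using base_point_in_plane by auto
    then show ?thesis
      using True card_span_singleton[OF assms(1)] by (simp add: card_Diff_subset)
  next
    case False
    have "r - p \<notin> vec.span {v}"
    proof
      assume "r - p \<in> vec.span {v}"
      then obtain t where "r - p = t *s v" unfolding vec.span_singleton by blast
      then have "r \<in> line p v" unfolding mem_line_iff by (metis add.commute diff_add_cancel)
      then show False using False m line_eq_of_mem by metis
    qed
    then show ?thesis
      using False card_directions_of_planes_through[OF assms(1)]
      unfolding m line_subset_plane_iff by simp
  qed
qed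

lemma sum_over_parallel_classes:
  fixes L :: "('a::{finite,field} ^ 'n::finite) set set" and f :: "('a ^ 'n) set \<Rightarrow> nat"
  assumes "L \<subseteq> aff_lines"
  shows "(\<Sum>w\<in>- {0}. \<Sum>m\<in>L \<inter> parallel_class w. f m) = (CARD('a) - 1) * (\<Sum>m\<in>L. f m)"
proof -
  have "(\<Sum>w\<in>- {0}. \<Sum>m\<in>L \<inter> parallel_class w. f m)
      = (\<Sum>w\<in>- {0}. \<Sum>m\<in>L. of_bool (m \<in> parallel_class w) * f m)"
    by (simp add: Int_def)
  also have "\<dots> = (\<Sum>m\<in>L. \<Sum>w\<in>- {0}. of_bool (m \<in> parallel_class w) * f m)"
    by (rule sum.swap)
  also have "\<dots> = (\<Sum>m\<in>L. card {w. w \<noteq> 0 \<and> m \<in> parallel_class w} * f m)"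
    by (simp add: sum_distrib_right[symmetric] Int_def)
  also have "\<dots> = (\<Sum>m\<in>L. (CARD('a) - 1) * f m)"
    using assms card_directions_of_line by (intro sum.cong) auto
  finally show ?thesis by (simp add: sum_distrib_left)
qed

lemma sum_card_Int_line_parallel:
  fixes L :: "('a::{finite,field} ^ 'n::finite) set set"
  assumes "v \<noteq> 0"
  shows "(\<Sum>m\<in>L \<inter> parallel_class v. card (m \<inter> line p v)) = CARD('a) * of_bool (line p v \<in> L)"
proof -
  have "card (m \<inter> line p v) = (if m = line p v then CARD('a) else 0)"
    if "m \<in> parallel_class v" for m
  proof -
    have "m \<inter> line p v = {}" if "m \<noteq> line p v"
      using that \<open>m \<in> parallel_class v\<close> line_of_parallel_class_through line_eq_of_mem by blast
    then show ?thesis using card_line[OF assms] by auto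
  qed
  then have "(\<Sum>m\<in>L \<inter> parallel_class v. card (m \<inter> line p v))
      = (\<Sum>m\<in>L \<inter> parallel_class v. if m = line p v then CARD('a) else 0)"
    by (intro sum.cong) auto
  also have "\<dots> = CARD('a) * of_bool (line p v \<in> L)"
    by (simp add: parallel_class_def)
  finally show ?thesis .
qed

lemma sum_card_Int_line_transversal:
  fixes L :: "('a::{finite,field} ^ 'n::finite) set set"
  assumes spreads: "\<forall>S. is_line_spread S \<longrightarrow> card (L \<inter> S) = x"
    and "v \<noteq> 0" and w: "w \<notin> vec.span {v}"
  shows "(\<Sum>m\<in>L \<inter> parallel_class w. card (m \<inter> line p v))
       = card (L \<inter> {m \<in> parallel_class v. m \<subseteq> plane p v w})"
proof -
  have "(\<Sum>m\<in>L \<inter> parallel_class w. card (m \<inter> line p v))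
      = (\<Sum>m\<in>L \<inter> parallel_class w. of_bool (m \<subseteq> plane p v w))"
    using card_Int_line_of_transversal[OF w] by (intro sum.cong) auto
  also have "\<dots> = card (L \<inter> {m \<in> parallel_class w. m \<subseteq> plane p v w})"
    by (simp add: Int_def conj_assoc)
  also have "\<dots> = card (L \<inter> {m \<in> parallel_class v. m \<subseteq> plane p v w})"
    using card_Int_switched_lines[OF spreads \<open>v \<noteq> 0\<close> w] .
  finally show ?thesis .
qed

(* The term beta * [l in A] is added on both sides so that no truncated subtraction occurs. *)
lemma sum_if_eq_else_const:
  fixes \<alpha> \<beta> :: nat
  assumes "finite A"
  shows "(\<Sum>m\<in>A. if m = l then \<alpha> else \<beta>) + \<beta> * of_bool (l \<in> A) = \<alpha> * of_bool (l \<in> A) + \<beta> * card A"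
proof (cases "l \<in> A")
  case True
  then have "(\<Sum>m\<in>A. if m = l then \<alpha> else \<beta>) = \<alpha> + \<beta> * (card A - 1)"
    using assms by (simp add: sum.remove card_Diff_singleton)
  moreover have "card A \<noteq> 0" using True assms by auto
  ultimately show ?thesis
    using True by (cases "card A") simp_all
next
  case False
  then have "(\<Sum>m\<in>A. if m = l then \<alpha> else \<beta>) = (\<Sum>m\<in>A. \<beta>)" by (intro sum.cong) auto
  then show ?thesis using False by simp
qed

lemma sum_card_Int_line_transversal_classes:
  fixes L :: "('a::{finite,field} ^ 'n::finite) set set"
  assumes spreads: "\<forall>S. is_line_spread S \<longrightarrow> card (L \<inter> S) = x" and "v \<noteq> 0"
  shows "(\<Sum>w\<in>- vec.span {v}. \<Sum>m\<in>L \<inter> parallel_class w. card (m \<inter> line p v))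
           + CARD('a) * (CARD('a) - 1) * of_bool (line p v \<in> L)
       = (CARD('a) ^ CARD('n) - CARD('a)) * of_bool (line p v \<in> L) + CARD('a) * (CARD('a) - 1) * x"
proof -
  let ?A = "L \<inter> parallel_class v"
  have "(\<Sum>w\<in>- vec.span {v}. \<Sum>m\<in>L \<inter> parallel_class w. card (m \<inter> line p v))
      = (\<Sum>w\<in>- vec.span {v}. card (L \<inter> {m \<in> parallel_class v. m \<subseteq> plane p v w}))"
    using sum_card_Int_line_transversal[OF spreads \<open>v \<noteq> 0\<close>] by (intro sum.cong) auto
  also have "\<dots> = (\<Sum>w\<in>- vec.span {v}. \<Sum>m\<in>?A. of_bool (m \<subseteq> plane p v w))"
  proof -
    have "L \<inter> {m \<in> parallel_class v. m \<subseteq> plane p v w} = ?A \<inter> {m. m \<subseteq> plane p v w}" for w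
      by blast
    then show ?thesis by simp
  qed
  also have "\<dots> = (\<Sum>m\<in>?A. \<Sum>w\<in>- vec.span {v}. of_bool (m \<subseteq> plane p v w))"
    by (rule sum.swap)
  also have "\<dots> = (\<Sum>m\<in>?A. card {w. w \<notin> vec.span {v} \<and> m \<subseteq> plane p v w})"
    by (simp add: Int_def)
  also have "\<dots> = (\<Sum>m\<in>?A. if m = line p v
                     then CARD('a) ^ CARD('n) - CARD('a) else CARD('a) * (CARD('a) - 1))"
    using card_directions_of_planes_containing[OF \<open>v \<noteq> 0\<close>] by (intro sum.cong) auto
  finally have "(\<Sum>w\<in>- vec.span {v}. \<Sum>m\<in>L \<inter> parallel_class w. card (m \<inter> line p v))
      = (\<Sum>m\<in>?A. if m = line p v
           then CARD('a) ^ CARD('n) - CARD('a) else CARD('a) * (CARD('a) - 1))" .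
  moreover have "card ?A = x"
    using spreads is_line_spread_parallel_class[OF \<open>v \<noteq> 0\<close>] by blast
  moreover have "line p v \<in> ?A \<longleftrightarrow> line p v \<in> L"
    by (auto simp: parallel_class_def)
  ultimately show ?thesis
    using sum_if_eq_else_const[of ?A "line p v"
        "CARD('a) ^ CARD('n) - CARD('a)" "CARD('a) * (CARD('a) - 1)"]
    by simp
qed

lemma sum_card_Int_line:
  fixes L :: "('a::{finite,field} ^ 'n::finite) set set"
  assumes "L \<subseteq> aff_lines" and spreads: "\<forall>S. is_line_spread S \<longrightarrow> card (L \<inter> S) = x"
    and "v \<noteq> 0"
  shows "(CARD('a) - 1) * (\<Sum>m\<in>L. card (m \<inter> line p v))
       = (CARD('a) ^ CARD('n) - CARD('a)) * of_bool (line p v \<in> L) + CARD('a) * (CARD('a) - 1) * x"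
proof -
  let ?G = "\<lambda>w. \<Sum>m\<in>L \<inter> parallel_class w. card (m \<inter> line p v)"
  have "?G w = CARD('a) * of_bool (line p v \<in> L)" if w: "w \<in> vec.span {v} - {0}" for w
  proof -
    obtain t where "w = t *s v" "t \<noteq> 0" using w unfolding vec.span_singleton by auto
    then have "parallel_class w = parallel_class v" by (simp add: parallel_class_smult)
    then show ?thesis using sum_card_Int_line_parallel[OF \<open>v \<noteq> 0\<close>] by simp
  qed
  then have parallel: "(\<Sum>w\<in>vec.span {v} - {0}. ?G w)
      = (CARD('a) - 1) * (CARD('a) * of_bool (line p v \<in> L))"
    using card_span_singleton[OF \<open>v \<noteq> 0\<close>] by (simp add: card_Diff_singleton vec.span_zero)
  have "- {0} = (vec.span {v} - {0}) \<union> - vec.span {v}" using vec.span_zero by blast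
  moreover have "(\<Sum>w\<in>(vec.span {v} - {0}) \<union> - vec.span {v}. ?G w)
      = (\<Sum>w\<in>vec.span {v} - {0}. ?G w) + (\<Sum>w\<in>- vec.span {v}. ?G w)"
    by (rule sum.union_disjoint) auto
  ultimately have "(\<Sum>w\<in>- {0}. ?G w) = (\<Sum>w\<in>vec.span {v} - {0}. ?G w) + (\<Sum>w\<in>- vec.span {v}. ?G w)"
    by simp
  then have "(CARD('a) - 1) * (\<Sum>m\<in>L. card (m \<inter> line p v))
      = (CARD('a) - 1) * (CARD('a) * of_bool (line p v \<in> L)) + (\<Sum>w\<in>- vec.span {v}. ?G w)"
    using sum_over_parallel_classes[OF assms(1)] parallel by simp
  then show ?thesis
    using sum_card_Int_line_transversal_classes[OF spreads \<open>v \<noteq> 0\<close>, of p]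
    by (simp add: algebra_simps)
qed

lemma sum_card_incident_eq_sum_card_Int:
  assumes "finite l" and "finite L"
  shows "(\<Sum>z\<in>l. card {m \<in> L. z \<in> m}) = (\<Sum>m\<in>L. card (m \<inter> l))"
proof -
  have "(\<Sum>z\<in>l. card {m \<in> L. z \<in> m}) = (\<Sum>z\<in>l. \<Sum>m\<in>L. of_bool (z \<in> m))"
    using assms by (simp add: Int_def)
  also have "\<dots> = (\<Sum>m\<in>L. \<Sum>z\<in>l. of_bool (z \<in> m))"
    by (rule sum.swap)
  also have "\<dots> = (\<Sum>m\<in>L. card (m \<inter> l))"
    using assms by (simp add: Int_commute)
  finally show ?thesis .
qed

lemma card_field_ge_2: "CARD('a::{finite,field}) \<ge> 2"
proof -
  have "card {0::'a, 1} \<le> CARD('a)" by (rule card_mono) auto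
  then show ?thesis by simp
qed

lemma CL_parameter_if_constant_spread_intersections:
  fixes L :: "('a::{finite,field} ^ 'n::finite) set set"
  assumes "L \<subseteq> aff_lines" and spreads: "\<forall>S. is_line_spread S \<longrightarrow> card (L \<inter> S) = x"
  shows "CL_parameter L = real x"
proof -
  let ?q = "CARD('a)" and ?N = "CARD('n)"
  have "(?q - 1) * card L = (\<Sum>w\<in>- {0}. card (L \<inter> parallel_class w))"
    using sum_over_parallel_classes[OF assms(1), of "\<lambda>_. 1"] by simp
  also have "\<dots> = (\<Sum>w\<in>- {0::'a ^ 'n}. x)"
    using spreads is_line_spread_parallel_class by (intro sum.cong) auto
  also have "\<dots> = (?q ^ ?N - 1) * x"
    by (simp add: Compl_eq_Diff_UNIV card_Diff_singleton)
  finally have "real ((?q - 1) * card L) = real ((?q ^ ?N - 1) * x)" by (rule arg_cong)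
  moreover have "1 < real ?q ^ ?N"
    using card_field_ge_2[where 'a = 'a] finite_UNIV_card_ge_0[where 'a = 'n] by simp
  ultimately show ?thesis
    by (simp add: CL_parameter_def of_nat_diff field_simps)
qed

lemma sum_degrees_over_line:
  fixes L :: "('a::{finite,field} ^ 'n::finite) set set"
  assumes "L \<subseteq> aff_lines" and spreads: "\<forall>S. is_line_spread S \<longrightarrow> card (L \<inter> S) = x"
    and "l \<in> aff_lines"
  shows "(real CARD('a) - 1) * (\<Sum>z\<in>l. real (card {m \<in> L. z \<in> m}))
       = (real CARD('a) ^ CARD('n) - real CARD('a)) * of_bool (l \<in> L)
         + real CARD('a) * (real CARD('a) - 1) * real x"
proof -
  let ?q = "CARD('a)" and ?N = "CARD('n)"
  obtain p v where l: "l = line p v" and "v \<noteq> 0" using assms(3) unfolding aff_lines_eq by blast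
  have "real ((?q - 1) * (\<Sum>z\<in>l. card {m \<in> L. z \<in> m}))
      = real ((?q ^ ?N - ?q) * of_bool (l \<in> L) + ?q * (?q - 1) * x)"
    using sum_card_Int_line[OF assms(1) spreads \<open>v \<noteq> 0\<close>, of p]
    by (simp add: l sum_card_incident_eq_sum_card_Int)
  moreover have "1 \<le> ?q" and "?q \<le> ?q ^ ?N"
    using card_field_ge_2[where 'a = 'a] finite_UNIV_card_ge_0[where 'a = 'n]
    by (simp_all add: self_le_power)
  ultimately show ?thesis by (simp add: of_nat_diff)
qed

lemma CL_line_class_if_constant_spread_intersections:
  fixes L :: "('a::{finite,field} ^ 'n::finite) set set"
  assumes "CARD('n) \<ge> 2" and "L \<subseteq> aff_lines"
    and spreads: "\<forall>S. is_line_spread S \<longrightarrow> card (L \<inter> S) = x"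
  shows "CL_line_class L"
proof -
  let ?q = "real CARD('a)" and ?N = "CARD('n)"
  define D where "D = ?q ^ ?N - ?q"
  have "CARD('a) ^ 1 < CARD('a) ^ ?N"
    using card_field_ge_2[where 'a = 'a] assms(1) by (intro power_strict_increasing) auto
  then have "D > 0" unfolding D_def by simp
  define c where "c z = (?q - 1) * (real (card {m \<in> L. z \<in> m}) - real x) / D" for z :: "'a ^ 'n"
  have "(if l \<in> L then 1 else 0) = (\<Sum>z\<in>UNIV. incid z l * c z)" if l: "l \<in> aff_lines" for l
  proof -
    obtain p v where "l = line p v" and "v \<noteq> 0" using l unfolding aff_lines_eq by blast
    then have "card l = CARD('a)" by (simp add: card_line)
    have "(\<Sum>z\<in>UNIV. incid z l * c z) = (\<Sum>z\<in>l. c z)"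
      by (simp add: incid_def flip: of_bool_def)
    also have "\<dots> = ((?q - 1) * (\<Sum>z\<in>l. real (card {m \<in> L. z \<in> m})) - ?q * (?q - 1) * real x) / D"
      using \<open>card l = CARD('a)\<close>
      by (simp add: c_def sum_divide_distrib[symmetric] sum_subtractf right_diff_distrib
          sum_distrib_left)
    also have "\<dots> = of_bool (l \<in> L)"
      using sum_degrees_over_line[OF assms(2) spreads l] \<open>D > 0\<close> by (simp add: D_def)
    finally show ?thesis by simp
  qed
  then show ?thesis unfolding CL_line_class_def using assms(2) by blast
qed

theorem theorem5p1:
  fixes L :: "(('a::{finite,field}) ^ ('n::finite)) set set" and x :: nat
  assumes "CARD('n) \<ge> 3"
    and "L \<subseteq> aff_lines"
    and "\<forall>S. is_line_spread S \<longrightarrow> card (L \<inter> S) = x"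
  shows "CL_line_class L \<and> CL_parameter L = real x"
proof
  show "CL_line_class L"
    using assms by (intro CL_line_class_if_constant_spread_intersections) auto
  show "CL_parameter L = real x"
    using assms(2,3) by (rule CL_parameter_if_constant_spread_intersections)
qed

end
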